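(* Let $f_{SG}(x)=\sqrt{\frac{x^2+1}{2}}-\sqrt x$ for $x\in(0,\infty)$, let $f_{SG}^*(u)=u\,f_{SG}\!\left(\frac{1-u}{u}\right)$ for $u\in(0,1)$, extended by continuity to $[0,1]$ (explicitly $f_{SG}^*(u)=\frac{\sqrt2}{2}\sqrt{u^2+(1-u)^2}-\sqrt{u(1-u)}$), and define $\overline M_{SG}(C_1,C_2)=E_X\{f_{SG}^*(P(C_2\mid x))\}$. Then $$P_e\le \frac12\left[1-\frac{2}{\sqrt2}\,\overline M_{SG}(C_1,C_2)\right].$$
   Context: Two-class decision problem: classes $C_1,C_2$, an observation $x$ in a space $\mathrm X$ with density $p(x)$, and a posteriori probabilities $P(C_1\mid x),P(C_2\mid x)\ge0$ with $P(C_1\mid x)+P(C_2\mid x)=1$. $E_X\{g(x)\}=\int_{\mathrm X} g(x)p(x)\,dx$. $P_e=E_X\{\min(P(C_1\mid x),P(C_2\mid x))\}$ is the Bayesian probability of error. *)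

theory Defs
  imports "HOL-Analysis.Analysis"
begin

text \<open>The observation space is Euclidean; the observation has a density p with
  respect to Lebesgue measure, and the expectation is the Lebesgue integral of g times p.\<close>

definition E_X :: "('a::euclidean_space \<Rightarrow> real) \<Rightarrow> ('a \<Rightarrow> real) \<Rightarrow> real" where
  "E_X p g = (\<integral>x. g x * p x \<partial>lborel)"

definition f_SG :: "real \<Rightarrow> real" where
  "f_SG x = sqrt ((x^2 + 1) / 2) - sqrt x"

text \<open>Perspective-type transform, on (0,1) by definition, at the endpoints by its
  continuous extension (explicit formula).\<close>
definition f_SG_star :: "real \<Rightarrow> real" where
  "f_SG_star u = (if 0 < u \<and> u < 1 then u * f_SG ((1 - u) / u)
     else sqrt 2 / 2 * sqrt (u^2 + (1 - u)^2) - sqrt (u * (1 - u)))"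

definition P_e :: "('a::euclidean_space \<Rightarrow> real) \<Rightarrow> ('a \<Rightarrow> real) \<Rightarrow> ('a \<Rightarrow> real) \<Rightarrow> real" where
  "P_e p P1 P2 = E_X p (\<lambda>x. min (P1 x) (P2 x))"

definition M_SG :: "('a::euclidean_space \<Rightarrow> real) \<Rightarrow> ('a \<Rightarrow> real) \<Rightarrow> ('a \<Rightarrow> real) \<Rightarrow> real" where
  "M_SG p P1 P2 = E_X p (\<lambda>x. f_SG_star (P2 x))"

end

theory Submission
  imports Defs
begin

text \<open>Writing \<open>v = 1 - u\<close>, the bound reduces pointwise to
  \<open>sqrt (u\<^sup>2 + v\<^sup>2) \<le> \<bar>v - u\<bar> + sqrt 2 * sqrt (u * v)\<close>, which after squaring is
  \<open>0 \<le> 2 * sqrt 2 * \<bar>v - u\<bar> * sqrt (u * v)\<close>; integrating against the density gives the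
  claim, since \<open>min u v = (u + v - \<bar>v - u\<bar>) / 2\<close>.\<close>

lemma f_SG_star_eq:
  assumes "0 \<le> u" "u \<le> 1"
  shows "f_SG_star u = sqrt 2 / 2 * sqrt (u\<^sup>2 + (1 - u)\<^sup>2) - sqrt (u * (1 - u))"
proof (cases "0 < u \<and> u < 1")
  case True
  then have u: "u > 0" by auto
  have first: "u * sqrt ((((1 - u) / u)\<^sup>2 + 1) / 2) = sqrt 2 / 2 * sqrt (u\<^sup>2 + (1 - u)\<^sup>2)"
  proof -
    have "(((1 - u) / u)\<^sup>2 + 1) / 2 = (u\<^sup>2 + (1 - u)\<^sup>2) / u\<^sup>2 / 2"
      using u by (simp add: field_simps power2_eq_square)
    then have "u * sqrt ((((1 - u) / u)\<^sup>2 + 1) / 2) = u * sqrt ((u\<^sup>2 + (1 - u)\<^sup>2) / u\<^sup>2 / 2)"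
      by (simp only:)
    also have "\<dots> = u * (sqrt (u\<^sup>2 + (1 - u)\<^sup>2) / (u * sqrt 2))"
      using u by (simp add: real_sqrt_divide real_sqrt_mult)
    also have "\<dots> = sqrt (u\<^sup>2 + (1 - u)\<^sup>2) / sqrt 2"
      using u by simp
    also have "\<dots> = sqrt 2 / 2 * sqrt (u\<^sup>2 + (1 - u)\<^sup>2)"
      by (simp add: field_simps)
    finally show ?thesis .
  qed
  have second: "u * sqrt ((1 - u) / u) = sqrt (u * (1 - u))"
  proof -
    have "u * sqrt ((1 - u) / u) = sqrt (u * u) * sqrt ((1 - u) / u)"
      using u by simp
    also have "\<dots> = sqrt (u * u * ((1 - u) / u))"
      by (simp only: real_sqrt_mult)
    also have "u * u * ((1 - u) / u) = u * (1 - u)"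
      using u by (simp add: field_simps)
    finally show ?thesis .
  qed
  show ?thesis
    using True first second by (simp add: f_SG_star_def f_SG_def right_diff_distrib)
qed (auto simp: f_SG_star_def)

lemma f_SG_star_bounded:
  assumes "0 \<le> u" "u \<le> 1"
  shows "\<bar>f_SG_star u\<bar> \<le> 1"
proof -
  have uv: "0 \<le> u * (1 - u)" "u * (1 - u) \<le> 1"
    using assms by (auto simp: mult_le_one)
  have "u\<^sup>2 + (1 - u)\<^sup>2 = 1 - 2 * (u * (1 - u))"
    by (simp add: power2_eq_square algebra_simps)
  then have "sqrt (u\<^sup>2 + (1 - u)\<^sup>2) \<le> 1"
    using uv by simp
  then have "sqrt 2 / 2 * sqrt (u\<^sup>2 + (1 - u)\<^sup>2) \<le> sqrt 2 / 2"
    using mult_left_mono[of "sqrt (u\<^sup>2 + (1 - u)\<^sup>2)" 1 "sqrt 2 / 2"] by simp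
  moreover have "sqrt 2 / 2 \<le> 1"
    by (simp add: real_sqrt_le_iff[of 2 4, simplified])
  moreover have "0 \<le> sqrt 2 / 2 * sqrt (u\<^sup>2 + (1 - u)\<^sup>2)"
    by simp
  moreover have "0 \<le> sqrt (u * (1 - u))" "sqrt (u * (1 - u)) \<le> 1"
    using uv by auto
  ultimately show ?thesis
    unfolding f_SG_star_eq[OF assms] abs_le_iff by linarith
qed

lemma borel_measurable_f_SG_star [measurable]: "f_SG_star \<in> borel_measurable borel"
  unfolding f_SG_star_def f_SG_def by measurable

lemma sqrt_sum_squares_le:
  fixes a b :: real
  assumes "0 \<le> a" "a \<le> b"
  shows "sqrt (a\<^sup>2 + b\<^sup>2) \<le> (b - a) + sqrt 2 * sqrt (a * b)"
proof (rule real_le_lsqrt)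
  have "(sqrt 2 * sqrt (a * b))\<^sup>2 = 2 * a * b"
    using assms by (simp add: power_mult_distrib)
  then show "a\<^sup>2 + b\<^sup>2 \<le> ((b - a) + sqrt 2 * sqrt (a * b))\<^sup>2"
    using assms by (simp add: power2_sum power2_diff)
qed (use assms in auto)

lemma min_le_f_SG_star:
  assumes "0 \<le> u" "u \<le> 1"
  shows "min u (1 - u) \<le> 1/2 - sqrt 2 / 2 * f_SG_star u"
proof -
  have "sqrt 2 / 2 * f_SG_star u = 1/2 * sqrt (u\<^sup>2 + (1 - u)\<^sup>2) - sqrt 2 / 2 * sqrt (u * (1 - u))"
    using assms by (simp add: f_SG_star_eq right_diff_distrib mult.assoc[symmetric])
  moreover have "sqrt (u\<^sup>2 + (1 - u)\<^sup>2) \<le> \<bar>(1 - u) - u\<bar> + sqrt 2 * sqrt (u * (1 - u))"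
  proof (cases "u \<le> 1 - u")
    case True
    then show ?thesis
      using sqrt_sum_squares_le[of u "1 - u"] assms by simp
  next
    case False
    then show ?thesis
      using sqrt_sum_squares_le[of "1 - u" u] assms by (simp add: add.commute mult.commute)
  qed
  moreover have "min u (1 - u) = (1 - \<bar>(1 - u) - u\<bar>) / 2"
    by (simp add: min_def abs_if)
  ultimately show ?thesis
    by linarith
qed

lemma integrable_bounded_mult:
  fixes g p :: "'a \<Rightarrow> real"
  assumes "integrable M p" "g \<in> borel_measurable M" "\<And>x. x \<in> space M \<Longrightarrow> \<bar>g x\<bar> \<le> C"
  shows "integrable M (\<lambda>x. g x * p x)"
proof (rule Bochner_Integration.integrable_bound)
  show "integrable M (\<lambda>x. C * p x)"
    using assms(1) by simp
  have "\<bar>g x\<bar> * \<bar>p x\<bar> \<le> \<bar>C\<bar> * \<bar>p x\<bar>" if "x \<in> space M" for x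
    using assms(3)[OF that] by (intro mult_right_mono) auto
  then show "AE x in M. norm (g x * p x) \<le> norm (C * p x)"
    by (auto simp: abs_mult)
qed (use assms in auto)

theorem mainTheorem5:
  fixes p P1 P2 :: "'a::euclidean_space \<Rightarrow> real"
  assumes p_meas: "p \<in> borel_measurable lborel"
    and p_nonneg: "\<And>x. p x \<ge> 0"
    and p_int: "integrable lborel p"
    and p_total: "(\<integral>x. p x \<partial>lborel) = 1"
    and P1_meas: "P1 \<in> borel_measurable lborel"
    and P2_meas: "P2 \<in> borel_measurable lborel"
    and P1_nonneg: "\<And>x. P1 x \<ge> 0"
    and P2_nonneg: "\<And>x. P2 x \<ge> 0"
    and P_sum: "\<And>x. P1 x + P2 x = 1"
  shows "P_e p P1 P2 \<le> 1/2 * (1 - 2 / sqrt 2 * M_SG p P1 P2)"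
proof -
  have P2_le: "P2 x \<le> 1" for x
    using P_sum[of x] P1_nonneg[of x] by linarith
  have int_f: "integrable lborel (\<lambda>x. f_SG_star (P2 x) * p x)"
    using P2_nonneg P2_le P2_meas
    by (intro integrable_bounded_mult[OF p_int]) (auto intro: f_SG_star_bounded)
  have int_min: "integrable lborel (\<lambda>x. min (P1 x) (P2 x) * p x)"
    using P1_nonneg P2_nonneg P2_le P1_meas P2_meas
    by (intro integrable_bounded_mult[OF p_int, where C = 1]) (auto simp: min_le_iff_disj)
  have "P_e p P1 P2 \<le> (\<integral>x. 1/2 * p x - sqrt 2 / 2 * (f_SG_star (P2 x) * p x) \<partial>lborel)"
    unfolding P_e_def E_X_def
  proof (rule integral_mono[OF int_min])
    fix x
    have "min (P1 x) (P2 x) \<le> 1/2 - sqrt 2 / 2 * f_SG_star (P2 x)"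
      using min_le_f_SG_star[OF P2_nonneg P2_le, of x] P_sum[of x] by (simp add: min.commute)
    from mult_right_mono[OF this p_nonneg[of x]]
    show "min (P1 x) (P2 x) * p x \<le> 1/2 * p x - sqrt 2 / 2 * (f_SG_star (P2 x) * p x)"
      by (simp add: algebra_simps)
  qed (use int_f p_int in auto)
  also have "\<dots> = 1/2 - sqrt 2 / 2 * M_SG p P1 P2"
    using int_f p_int p_total by (simp add: M_SG_def E_X_def)
  also have "\<dots> = 1/2 * (1 - 2 / sqrt 2 * M_SG p P1 P2)"
    by (simp add: real_div_sqrt algebra_simps)
  finally show ?thesis .
qed

end
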